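(* Let $G=\mathbb{Z}_2$ or $G=\mathbb{Z}_2\times\mathbb{Z}_2$ and $m\ge3$. Then the set $Y_{G,m}$ defined in the context is not convex.
   Context: $G$ is written additively with identity $0$; for $G=\mathbb{Z}_2$ the characters are $\hat g(h)=(-1)^{gh}$, and for $G=\mathbb{Z}_2\times\mathbb{Z}_2$ they are $\widehat{(a,b)}((c,d))=(-1)^{ac+bd}$. For $\mathbf g,\mathbf h\in G^m$ let $\widehat{\mathbf g}(\mathbf h)=\prod_{x=1}^m\hat g_x(h_x)$. Let $\Delta$ be the probability simplex in $\mathbb{R}^{G^m}$ and let $q$-space be $\{H\mathbf p:\mathbf p\in\Delta\}$, where $(H\mathbf p)_{\mathbf g}=\sum_{\mathbf h\in G^m}\widehat{\mathbf g}(\mathbf h)p_{\mathbf h}$. A split is a bipartition of the taxon set $\{1,\dots,m\}$ into two nonempty parts; for a split $s$, $\Lambda(s)$ denotes the part not containing taxon $m$. For a split $s$ and $h\in G$, $\boldsymbol\rho(s,h)\in G^m$ assigns $h$ to each taxon in $\Lambda(s)$ and $0$ to the others. $Y_{G,m}$ is the set of points $\mathbf q$ of $q$-space such that for every split $s$ and every $h\in G\setminus\{0\}$, $$\prod_{\mathbf g\in G^m:\ \widehat{\boldsymbol\rho(s,h)}(\mathbf g)=1} q_{\mathbf g}\ \ge\ \prod_{\mathbf g\in G^m:\ \widehat{\boldsymbol\rho(s,h)}(\mathbf g)=-1} q_{\mathbf g}.$$ *)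

theory Defs
  imports "HOL-Analysis.Analysis"
begin

text \<open>A finite abelian group G is described by its identity z and its character
 table chi, where chi g h is the value of the character of g at h.
 Taxa 1..m are represented by indices 0..m-1; taxon m is index m-1.
 Elements of G^m are functions on {0..<m} (extensional, as in PiE).\<close>

definition Gm :: "nat \<Rightarrow> (nat \<Rightarrow> 'g) set" where
  "Gm m = PiE {0..<m} (\<lambda>_. UNIV)"

definition hatv :: "('g \<Rightarrow> 'g \<Rightarrow> real) \<Rightarrow> nat \<Rightarrow> (nat \<Rightarrow> 'g) \<Rightarrow> (nat \<Rightarrow> 'g) \<Rightarrow> real" where
  "hatv chi m g h = (\<Prod>x<m. chi (g x) (h x))"

definition prob_simplex :: "nat \<Rightarrow> ((nat \<Rightarrow> 'g) \<Rightarrow> real) set" where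
  "prob_simplex m = {p. (\<forall>h\<in>Gm m. 0 \<le> p h) \<and> (\<forall>h. h \<notin> Gm m \<longrightarrow> p h = 0)
                   \<and> sum p (Gm m) = 1}"

definition Hmap :: "('g \<Rightarrow> 'g \<Rightarrow> real) \<Rightarrow> nat \<Rightarrow> ((nat \<Rightarrow> 'g) \<Rightarrow> real) \<Rightarrow> ((nat \<Rightarrow> 'g) \<Rightarrow> real)" where
  "Hmap chi m p = (\<lambda>g. if g \<in> Gm m then (\<Sum>h\<in>Gm m. hatv chi m g h * p h) else 0)"

definition qspace :: "('g::finite \<Rightarrow> 'g \<Rightarrow> real) \<Rightarrow> nat \<Rightarrow> ((nat \<Rightarrow> 'g) \<Rightarrow> real) set" where
  "qspace chi m = Hmap chi m ` prob_simplex m"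

definition is_split :: "nat \<Rightarrow> nat set set \<Rightarrow> bool" where
  "is_split m s \<longleftrightarrow> (\<exists>A B. s = {A, B} \<and> A \<noteq> {} \<and> B \<noteq> {} \<and> A \<inter> B = {} \<and> A \<union> B = {0..<m})"

definition Lambda :: "nat \<Rightarrow> nat set set \<Rightarrow> nat set" where
  "Lambda m s = (THE A. A \<in> s \<and> m - 1 \<notin> A)"

definition rho :: "'g \<Rightarrow> nat \<Rightarrow> nat set set \<Rightarrow> 'g \<Rightarrow> (nat \<Rightarrow> 'g)" where
  "rho z m s h = restrict (\<lambda>x. if x \<in> Lambda m s then h else z) {0..<m}"

definition Yset :: "'g \<Rightarrow> ('g::finite \<Rightarrow> 'g \<Rightarrow> real) \<Rightarrow> nat \<Rightarrow> ((nat \<Rightarrow> 'g) \<Rightarrow> real) set" where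
  "Yset z chi m = {q \<in> qspace chi m. \<forall>s h. is_split m s \<longrightarrow> h \<noteq> z \<longrightarrow>
      (\<Prod>g\<in>{g\<in>Gm m. hatv chi m (rho z m s h) g = 1}. q g)
        \<ge> (\<Prod>g\<in>{g\<in>Gm m. hatv chi m (rho z m s h) g = -1}. q g)}"

definition convex_fun_set :: "('a \<Rightarrow> real) set \<Rightarrow> bool" where
  "convex_fun_set S \<longleftrightarrow> (\<forall>x\<in>S. \<forall>y\<in>S. \<forall>t::real. 0 \<le> t \<and> t \<le> 1 \<longrightarrow>
      (\<lambda>i. t * x i + (1 - t) * y i) \<in> S)"

text \<open>Z_2 = bool (False = 0, True = 1), characters (-1)^(gh).\<close>
definition chiZ2 :: "bool \<Rightarrow> bool \<Rightarrow> real" where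
  "chiZ2 g h = (-1) ^ (of_bool g * of_bool h)"

text \<open>Z_2 x Z_2 = bool x bool, characters (-1)^(ac+bd).\<close>
definition chiZ2Z2 :: "bool \<times> bool \<Rightarrow> bool \<times> bool \<Rightarrow> real" where
  "chiZ2Z2 g h = (case g of (a, b) \<Rightarrow> case h of (c, d) \<Rightarrow>
      (-1) ^ (of_bool a * of_bool c + of_bool b * of_bool d))"

end

theory Submission
  imports Defs
begin

(* Work with an abstract character table chi on a finite set G with distinguished
   zero z: chi is symmetric, {1,-1}-valued, multiplicative in its second argument with respect to
   some addition, trivial at z, every h \<noteq> z has a character value -1, and some e has chi e e = -1.
   Both Z_2 and Z_2 x Z_2 are instances.
   For u \<in> G^m let q_u = H(1/2 \<delta>_0 + 1/2 \<delta>_u); its coordinates are q_u(g) = (1 + \<hat>g(u))/2, so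
   q_u is the 0/1 indicator of the characters trivial at u.  Every such q_u lies in Y: for a split
   with character \<rho>, the set C = {g. \<hat>\<rho>(g) = -1} is a nonempty coset of K = {g. \<hat>\<rho>(g) = 1},
   so either q_u vanishes somewhere on C (right-hand product 0) or q_u is identically 1
   (both products 1).
   With u1 = e at taxon 1 and u2 = e at taxa 0 and 1, the midpoint of q_u1 and q_u2 violates the
   inequality for the split {0} | rest and h = e: it vanishes at u1 \<in> K but equals 1/2 on C. *)

lemma Lambda_split:
  assumes "is_split m s"
  shows "Lambda m s \<noteq> {}" and "Lambda m s \<subseteq> {0..<m}"
proof -
  obtain A B where s: "s = {A, B}" "A \<noteq> {}" "B \<noteq> {}" "A \<inter> B = {}" "A \<union> B = {0..<m}"
    using assms unfolding is_split_def by blast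
  then have "m - 1 \<in> A \<union> B" by auto
  then have "Lambda m s = (if m - 1 \<in> A then B else A)"
    unfolding Lambda_def s(1) using s(4) by (intro the_equality) auto
  then show "Lambda m s \<noteq> {}" and "Lambda m s \<subseteq> {0..<m}" using s by auto
qed

lemma finite_Gm [simp]: "finite (Gm m :: (nat \<Rightarrow> 'g::finite) set)"
  unfolding Gm_def by (intro finite_PiE) auto

locale character_table =
  fixes z :: "'g::finite" and chi :: "'g \<Rightarrow> 'g \<Rightarrow> real"
    and add :: "'g \<Rightarrow> 'g \<Rightarrow> 'g" and e :: 'g
  assumes chi_sym: "chi a b = chi b a"
    and chi_add: "chi g (add a b) = chi g a * chi g b"
    and chi_sign: "chi a b = 1 \<or> chi a b = -1"
    and chi_zero: "chi g z = 1"
    and chi_separates: "h \<noteq> z \<Longrightarrow> \<exists>a. chi h a = -1"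
    and chi_e_e: "chi e e = -1"
begin

lemma e_nonzero: "e \<noteq> z"
  using chi_e_e chi_zero by force

lemma hatv_sym: "hatv chi m g h = hatv chi m h g"
  unfolding hatv_def using chi_sym by metis

lemma hatv_sign: "hatv chi m g h = 1 \<or> hatv chi m g h = -1"
proof -
  have "\<bar>hatv chi m g h\<bar> = (\<Prod>x<m. \<bar>chi (g x) (h x)\<bar>)"
    unfolding hatv_def by (rule abs_prod)
  also have "\<dots> = 1"
    using chi_sign by (intro prod.neutral) (metis abs_1 abs_minus_cancel)
  finally show ?thesis by (auto simp: abs_if split: if_splits)
qed

definition vadd :: "nat \<Rightarrow> (nat \<Rightarrow> 'g) \<Rightarrow> (nat \<Rightarrow> 'g) \<Rightarrow> nat \<Rightarrow> 'g" where
  "vadd m k c = restrict (\<lambda>x. add (k x) (c x)) {0..<m}"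

lemma vadd_Gm: "vadd m k c \<in> Gm m"
  by (simp add: vadd_def Gm_def)

lemma hatv_vadd: "hatv chi m g (vadd m k c) = hatv chi m g k * hatv chi m g c"
  unfolding hatv_def vadd_def prod.distrib[symmetric]
  by (intro prod.cong) (auto simp: chi_add)

definition vec_on :: "nat \<Rightarrow> nat set \<Rightarrow> 'g \<Rightarrow> nat \<Rightarrow> 'g" where
  "vec_on m S a = restrict (\<lambda>x. if x \<in> S then a else z) {0..<m}"

lemma vec_on_Gm: "vec_on m S a \<in> Gm m"
  by (simp add: vec_on_def Gm_def)

lemma rho_vec_on: "rho z m s h = vec_on m (Lambda m s) h"
  unfolding rho_def vec_on_def ..

lemma hatv_vec_on: "hatv chi m g (vec_on m S a) = (\<Prod>x \<in> {..<m} \<inter> S. chi (g x) a)"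
proof -
  have "hatv chi m g (vec_on m S a) = (\<Prod>x<m. if x \<in> S then chi (g x) a else 1)"
    unfolding hatv_def vec_on_def by (intro prod.cong) (auto simp: chi_zero)
  also have "\<dots> = (\<Prod>x \<in> {..<m} \<inter> S. chi (g x) a)"
    by (rule prod.inter_restrict[symmetric]) simp
  finally show ?thesis .
qed

lemma hatv_vec_on_subset:
  "S \<subseteq> {..<m} \<Longrightarrow> hatv chi m g (vec_on m S a) = (\<Prod>x\<in>S. chi (g x) a)"
  by (simp add: hatv_vec_on Int_absorb1)

lemma split_character_nontrivial:
  assumes "is_split m s" "h \<noteq> z"
  obtains c where "c \<in> Gm m" "hatv chi m (rho z m s h) c = -1"
proof -
  obtain x0 where "x0 \<in> Lambda m s"
    using Lambda_split(1)[OF assms(1)] by blast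
  then have x0: "x0 \<in> Lambda m s" "x0 < m"
    using Lambda_split(2)[OF assms(1)] by auto
  obtain a where a: "chi h a = -1"
    using chi_separates[OF assms(2)] by blast
  have "hatv chi m (rho z m s h) (vec_on m {x0} a) = chi (rho z m s h x0) a"
    using x0 by (simp add: hatv_vec_on)
  also have "\<dots> = -1"
    using x0 a by (simp add: rho_vec_on vec_on_def)
  finally show ?thesis using that vec_on_Gm by blast
qed

text \<open>C is a coset of the kernel K, so a vector u on which all characters of C are trivial
  is annihilated by every character.\<close>
lemma trivial_on_coset_imp_trivial:
  assumes c: "c \<in> Gm m" "hatv chi m r c = -1"
    and trivial_C: "\<And>g. g \<in> Gm m \<Longrightarrow> hatv chi m r g = -1 \<Longrightarrow> hatv chi m g u = 1"
    and g: "g \<in> Gm m"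
  shows "hatv chi m g u = 1"
proof (cases "hatv chi m r g = -1")
  case True
  then show ?thesis using trivial_C g by blast
next
  case False
  then have "hatv chi m r (vadd m g c) = -1"
    using hatv_sign c by (metis hatv_vadd mult_1)
  then have "hatv chi m u (vadd m g c) = 1"
    using trivial_C vadd_Gm hatv_sym by metis
  moreover have "hatv chi m u c = 1"
    using trivial_C c hatv_sym by metis
  ultimately show ?thesis
    using hatv_sym by (metis hatv_vadd mult.right_neutral)
qed

definition half_delta :: "nat \<Rightarrow> (nat \<Rightarrow> 'g) \<Rightarrow> (nat \<Rightarrow> 'g) \<Rightarrow> real" where
  "half_delta m u h = (if h = vec_on m {} z then 1/2 else 0) + (if h = u then 1/2 else 0)"

definition vertex :: "nat \<Rightarrow> (nat \<Rightarrow> 'g) \<Rightarrow> (nat \<Rightarrow> 'g) \<Rightarrow> real" where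
  "vertex m u = Hmap chi m (half_delta m u)"

lemma half_delta_simplex:
  assumes "u \<in> Gm m"
  shows "half_delta m u \<in> prob_simplex m"
proof -
  have "sum (half_delta m u) (Gm m) = 1"
    unfolding half_delta_def using assms vec_on_Gm[of m "{}" z]
    by (simp add: sum.distrib sum.delta)
  then show ?thesis
    unfolding prob_simplex_def half_delta_def using assms vec_on_Gm by auto
qed

lemma vertex_qspace: "u \<in> Gm m \<Longrightarrow> vertex m u \<in> qspace chi m"
  unfolding vertex_def qspace_def using half_delta_simplex by blast

lemma vertex_value:
  assumes "u \<in> Gm m" "g \<in> Gm m"
  shows "vertex m u g = (1 + hatv chi m g u) / 2"
proof -
  have "vertex m u g = (\<Sum>h\<in>Gm m. hatv chi m g h * half_delta m u h)"
    unfolding vertex_def Hmap_def using assms(2) by simp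
  also have "\<dots> = (\<Sum>h\<in>Gm m. (if h = vec_on m {} z then hatv chi m g h / 2 else 0))
      + (\<Sum>h\<in>Gm m. (if h = u then hatv chi m g h / 2 else 0))"
    unfolding half_delta_def sum.distrib[symmetric] by (intro sum.cong) auto
  also have "\<dots> = (1 + hatv chi m g u) / 2"
    using assms vec_on_Gm[of m "{}" z]
    by (simp add: sum.delta hatv_vec_on add_divide_distrib)
  finally show ?thesis .
qed

lemma vertex_nonneg: "u \<in> Gm m \<Longrightarrow> g \<in> Gm m \<Longrightarrow> vertex m u g \<ge> 0"
  using hatv_sign[of m g u] by (auto simp: vertex_value)

lemma vertex_in_Y:
  assumes u: "u \<in> Gm m"
  shows "vertex m u \<in> Yset z chi m"
proof -
  have "(\<Prod>g\<in>{g\<in>Gm m. hatv chi m r g = -1}. vertex m u g)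
      \<le> (\<Prod>g\<in>{g\<in>Gm m. hatv chi m r g = 1}. vertex m u g)"
    if split: "is_split m s" and h: "h \<noteq> z" and r: "r = rho z m s h" for s h r
  proof (cases "\<forall>g\<in>Gm m. hatv chi m r g = -1 \<longrightarrow> hatv chi m g u = 1")
    case True
    obtain c where c: "c \<in> Gm m" "hatv chi m r c = -1"
      using split_character_nontrivial[OF split h] unfolding r by blast
    have "vertex m u g = 1" if "g \<in> Gm m" for g
    proof -
      have "hatv chi m g u = 1"
        using trivial_on_coset_imp_trivial[OF c _ that] True by blast
      then show ?thesis using vertex_value[OF u that] by simp
    qed
    then show ?thesis by simp
  next
    case False
    then obtain g where g: "g \<in> Gm m" "hatv chi m r g = -1" "hatv chi m g u \<noteq> 1" by blast
    then have "hatv chi m g u = -1"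
      using hatv_sign by metis
    then have "vertex m u g = 0"
      using vertex_value[OF u g(1)] by simp
    then have "(\<Prod>g\<in>{g\<in>Gm m. hatv chi m r g = -1}. vertex m u g) = 0"
      using g by (intro prod_zero) auto
    moreover have "(\<Prod>g\<in>{g\<in>Gm m. hatv chi m r g = 1}. vertex m u g) \<ge> 0"
      using u vertex_nonneg by (intro prod_nonneg) auto
    ultimately show ?thesis by linarith
  qed
  then show ?thesis
    unfolding Yset_def using vertex_qspace[OF u] by auto
qed

lemma first_taxon_split:
  assumes "m \<ge> 2"
  shows "is_split m {{0}, {1..<m}}" and "Lambda m {{0}, {1..<m}} = {0}"
proof -
  show "is_split m {{0}, {1..<m}}"
    unfolding is_split_def using assms by (intro exI[of _ "{0}"] exI[of _ "{1..<m}"]) auto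
  have "m - 1 \<in> {1..<m}" "m - 1 \<notin> {0}"
    using assms by auto
  then show "Lambda m {{0}, {1..<m}} = {0}"
    unfolding Lambda_def by (intro the_equality) auto
qed

lemma midpoint_not_in_Y:
  assumes m: "m \<ge> 2"
  defines "u1 \<equiv> vec_on m {1} e" and "u2 \<equiv> vec_on m {0, 1} e"
  shows "(\<lambda>i. 1/2 * vertex m u1 i + (1 - 1/2) * vertex m u2 i) \<notin> Yset z chi m"
    (is "?mid \<notin> _")
proof
  assume "?mid \<in> Yset z chi m"
  define r where "r = rho z m {{0}, {1..<m}} e"
  have split_ineq: "(\<Prod>g\<in>{g\<in>Gm m. hatv chi m r g = -1}. ?mid g)
      \<le> (\<Prod>g\<in>{g\<in>Gm m. hatv chi m r g = 1}. ?mid g)"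
    using \<open>?mid \<in> Yset z chi m\<close> first_taxon_split(1)[OF m] e_nonzero
    unfolding Yset_def r_def by blast
  have "r = vec_on m {0} e"
    unfolding r_def rho_vec_on first_taxon_split(2)[OF m] ..
  then have r_char: "hatv chi m r g = chi e (g 0)" for g
    using m hatv_sym[of m r g] by (simp add: hatv_vec_on_subset chi_sym)
  have u_Gm: "u1 \<in> Gm m" "u2 \<in> Gm m"
    unfolding u1_def u2_def by (rule vec_on_Gm)+
  have u1_char: "hatv chi m g u1 = chi (g 1) e"
    and u2_char: "hatv chi m g u2 = chi (g 0) e * chi (g 1) e" for g
    using m by (simp_all add: u1_def u2_def hatv_vec_on_subset)
  have mid_value: "?mid g = (2 + hatv chi m g u1 + hatv chi m g u2) / 4" if "g \<in> Gm m" for g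
    using u_Gm that by (simp add: vertex_value field_simps)
  have "u1 0 = z" "u1 1 = e"
    using m unfolding u1_def by (simp_all add: vec_on_def)
  then have "u1 \<in> {g\<in>Gm m. hatv chi m r g = 1}" "?mid u1 = 0"
    using u_Gm mid_value[OF u_Gm(1)]
    by (simp_all add: r_char u1_char u2_char chi_zero chi_e_e chi_sym)
  then have "(\<Prod>g\<in>{g\<in>Gm m. hatv chi m r g = 1}. ?mid g) = 0"
    by (intro prod_zero) auto
  moreover have "?mid g = 1/2" if "g \<in> Gm m" "hatv chi m r g = -1" for g
    using that mid_value[OF that(1)] by (simp add: u1_char u2_char r_char chi_sym)
  then have "(\<Prod>g\<in>{g\<in>Gm m. hatv chi m r g = -1}. ?mid g) > 0"
    by (intro prod_pos) (metis (mono_tags, lifting) mem_Collect_eq half_gt_zero_iff zero_less_one)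
  ultimately show False using split_ineq by linarith
qed

theorem Y_not_convex:
  assumes "m \<ge> 2"
  shows "\<not> convex_fun_set (Yset z chi m)"
proof
  assume convex: "convex_fun_set (Yset z chi m)"
  have "(\<lambda>i. 1/2 * vertex m (vec_on m {1} e) i + (1 - 1/2) * vertex m (vec_on m {0, 1} e) i)
      \<in> Yset z chi m"
    by (rule convex[unfolded convex_fun_set_def, rule_format]) (auto intro: vertex_in_Y vec_on_Gm)
  then show False using midpoint_not_in_Y[OF assms] by blast
qed

end

interpretation Z2: character_table False chiZ2 "\<lambda>a b. a \<noteq> b" True
proof
  fix a b g :: bool
  show "chiZ2 a b = chiZ2 b a" by (simp add: chiZ2_def mult.commute)
  show "chiZ2 g (a \<noteq> b) = chiZ2 g a * chiZ2 g b" by (cases a; cases b; cases g) (simp_all add: chiZ2_def)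
  show "chiZ2 a b = 1 \<or> chiZ2 a b = -1" by (cases a; cases b) (simp_all add: chiZ2_def)
  show "chiZ2 g False = 1" by (simp add: chiZ2_def)
  show "chiZ2 True True = -1" by (simp add: chiZ2_def)
next
  fix h :: bool assume "h \<noteq> False"
  then show "\<exists>a. chiZ2 h a = -1" by (intro exI[of _ True]) (simp add: chiZ2_def)
qed

interpretation Z2Z2: character_table "(False, False)" chiZ2Z2
  "\<lambda>x y. (fst x \<noteq> fst y, snd x \<noteq> snd y)" "(True, False)"
proof
  fix a b g :: "bool \<times> bool"
  show "chiZ2Z2 a b = chiZ2Z2 b a" by (cases a; cases b) (simp add: chiZ2Z2_def mult.commute)
  show "chiZ2Z2 g (fst a \<noteq> fst b, snd a \<noteq> snd b) = chiZ2Z2 g a * chiZ2Z2 g b"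
    by (cases a; cases b; cases g) (auto simp: chiZ2Z2_def)
  show "chiZ2Z2 a b = 1 \<or> chiZ2Z2 a b = -1" by (cases a; cases b) (auto simp: chiZ2Z2_def)
  show "chiZ2Z2 g (False, False) = 1" by (cases g) (simp add: chiZ2Z2_def)
  show "chiZ2Z2 (True, False) (True, False) = -1" by (simp add: chiZ2Z2_def)
next
  fix h :: "bool \<times> bool" assume "h \<noteq> (False, False)"
  then show "\<exists>a. chiZ2Z2 h a = -1"
    by (cases h) (auto simp: chiZ2Z2_def intro: exI[of _ "(True, False)"] exI[of _ "(False, True)"])
qed

theorem mainTheorem10:
  fixes m :: nat
  assumes "m \<ge> 3"
  shows "\<not> convex_fun_set (Yset False chiZ2 m)
       \<and> \<not> convex_fun_set (Yset (False, False) chiZ2Z2 m)"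
  using Z2.Y_not_convex Z2Z2.Y_not_convex assms by simp

end
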